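(* Fix $\gamma\neq0$. Consider the subclass of equations $i\psi_t+\psi_{xx}+|\psi|^\gamma\psi+V\psi=0$ whose potentials depend only on $t$, i.e. $V=V(t)$ is an arbitrary smooth complex-valued function of $t$. The intersection of the maximal Lie invariance algebras of all equations in this subclass is $\langle M,\ G(1),\ G(t)\rangle$. Explicitly, this is $\langle M,\ \partial_x,\ t\partial_x+\tfrac12 xM\rangle$.
   Context: $M=i(\psi\partial_\psi-\psi^*\partial_{\psi^*})$ and $G(\chi)=\chi\partial_x+\tfrac12\chi_t xM$. Lie symmetries are vector fields on the space of $(t,x,\psi,\psi^* )$, with $\psi^*$ treated as an independent variable. *)

theory Defs
  imports "HOL-Analysis.Analysis"
begin

text \<open>C-infinity smoothness on an (open) set: Frechet differentiable at every point of S,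
  and every directional derivative is again smooth (coinductively).\<close>
coinductive smooth_on :: "'a::real_normed_vector set \<Rightarrow> ('a \<Rightarrow> 'b::real_normed_vector) \<Rightarrow> bool" where
  "(\<forall>z\<in>S. f differentiable (at z)) \<Longrightarrow>
   (\<forall>v. smooth_on S (\<lambda>z. frechet_derivative f (at z) v)) \<Longrightarrow> smooth_on S f"

text \<open>Space of (t,x,psi); psi complex (psi* = conjugate, i.e. a vector field
  tau d_t + xi d_x + eta d_psi + conj eta d_psi* is encoded as (tau, xi, eta)).
  Domain psi \<noteq> 0, where |psi|^gamma is smooth.\<close>
definition D :: "(real \<times> real \<times> complex) set" where
  "D = {(t, x, u). u \<noteq> 0}"

type_synonym vfield = "real \<times> real \<times> complex \<Rightarrow> real \<times> real \<times> complex"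

definition vt :: "vfield \<Rightarrow> real \<times> real \<times> complex \<Rightarrow> real" where "vt Q z = fst (Q z)"
definition vx :: "vfield \<Rightarrow> real \<times> real \<times> complex \<Rightarrow> real" where "vx Q z = fst (snd (Q z))"
definition vu :: "vfield \<Rightarrow> real \<times> real \<times> complex \<Rightarrow> complex" where "vu Q z = snd (snd (Q z))"

definition pdt :: "(real \<times> real \<Rightarrow> 'b::real_normed_vector) \<Rightarrow> real \<times> real \<Rightarrow> 'b" where
  "pdt f p = frechet_derivative f (at p) (1, 0)"
definition pdx :: "(real \<times> real \<Rightarrow> 'b::real_normed_vector) \<Rightarrow> real \<times> real \<Rightarrow> 'b" where
  "pdx f p = frechet_derivative f (at p) (0, 1)"

definition pt :: "(real \<times> real \<Rightarrow> complex) \<Rightarrow> real \<times> real \<Rightarrow> real \<times> real \<times> complex" where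
  "pt u p = (fst p, snd p, u p)"

definition charQ :: "vfield \<Rightarrow> (real \<times> real \<Rightarrow> complex) \<Rightarrow> real \<times> real \<Rightarrow> complex" where
  "charQ Q u p = vu Q (pt u p) - of_real (vt Q (pt u p)) * pdt u p - of_real (vx Q (pt u p)) * pdx u p"

text \<open>Prolongation coefficients eta^t and eta^xx (standard formula
  eta^J = D_J(characteristic) + tau psi_{J t} + xi psi_{J x}).\<close>
definition eta_t :: "vfield \<Rightarrow> (real \<times> real \<Rightarrow> complex) \<Rightarrow> real \<times> real \<Rightarrow> complex" where
  "eta_t Q u p = pdt (charQ Q u) p + of_real (vt Q (pt u p)) * pdt (pdt u) p
                 + of_real (vx Q (pt u p)) * pdx (pdt u) p"

definition eta_xx :: "vfield \<Rightarrow> (real \<times> real \<Rightarrow> complex) \<Rightarrow> real \<times> real \<Rightarrow> complex" where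
  "eta_xx Q u p = pdx (pdx (charQ Q u)) p + of_real (vt Q (pt u p)) * pdt (pdx (pdx u)) p
                 + of_real (vx Q (pt u p)) * pdx (pdx (pdx u)) p"

definition NLS :: "real \<Rightarrow> (real \<Rightarrow> complex) \<Rightarrow> real \<times> real \<times> complex \<times> complex \<times> complex \<Rightarrow> complex" where
  "NLS \<gamma> V = (\<lambda>(t, x, u, ut, uxx). \<i> * ut + uxx + of_real (cmod u powr \<gamma>) * u + V t * u)"

definition jet :: "(real \<times> real \<Rightarrow> complex) \<Rightarrow> real \<times> real \<Rightarrow> real \<times> real \<times> complex \<times> complex \<times> complex" where
  "jet u p = (fst p, snd p, u p, pdt u p, pdx (pdx u) p)"

definition prQ :: "vfield \<Rightarrow> (real \<times> real \<Rightarrow> complex) \<Rightarrow> real \<times> real \<Rightarrow> real \<times> real \<times> complex \<times> complex \<times> complex" where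
  "prQ Q u p = (vt Q (pt u p), vx Q (pt u p), vu Q (pt u p), eta_t Q u p, eta_xx Q u p)"

text \<open>Infinitesimal invariance criterion Q^(2) Delta = 0 on Delta = 0; jet points are
  represented by values of smooth functions u (every 2-jet is realised).\<close>
definition lie_sym :: "real \<Rightarrow> (real \<Rightarrow> complex) \<Rightarrow> vfield \<Rightarrow> bool" where
  "lie_sym \<gamma> V Q \<longleftrightarrow> smooth_on D Q \<and>
     (\<forall>u p. smooth_on UNIV u \<longrightarrow> u p \<noteq> 0 \<longrightarrow> NLS \<gamma> V (jet u p) = 0 \<longrightarrow>
        frechet_derivative (NLS \<gamma> V) (at (jet u p)) (prQ Q u p) = 0)"

definition max_inv_alg :: "real \<Rightarrow> (real \<Rightarrow> complex) \<Rightarrow> vfield set" where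
  "max_inv_alg \<gamma> V = {Q. lie_sym \<gamma> V Q}"

text \<open>M = i(psi d_psi - psi* d_psi*) and G(chi) = chi d_x + 1/2 chi_t x M.\<close>
definition M_vf :: vfield where
  "M_vf = (\<lambda>(t, x, u). (0, 0, \<i> * u))"

definition G_vf :: "(real \<Rightarrow> real) \<Rightarrow> vfield" where
  "G_vf ch = (\<lambda>(t, x, u). (0, ch t, of_real (deriv ch t * x / 2) * (\<i> * u)))"

end

theory Submission
  imports Defs
begin

text \<open>A symmetry of all equations of the class is in particular a symmetry for the potentials
  \<open>V = 0\<close> and \<open>V = t - t\<^sub>0\<close>, which agree at \<open>t\<^sub>0\<close> but have different derivatives there; comparing the
  two criteria forces \<open>\<tau> = 0\<close>. For \<open>\<tau> = 0\<close> the criterion, evaluated on polynomials realising an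
  arbitrary 2-jet that solves the equation with a constant potential, gives determining equations
  in the first and second derivatives of \<open>Q\<close>. Varying the jet and the constant shows that \<open>\<eta>\<close> is
  complex-linear in \<open>\<psi>\<close>, that \<open>\<xi>\<close> depends on \<open>t\<close> only, and that \<open>\<eta>\<^sub>x = \<i> \<xi>\<^sub>t / 2\<close> and \<open>\<eta>\<^sub>x\<^sub>x = 0\<close>.
  Comparing \<open>|\<psi>| = 1\<close> with \<open>|\<psi>| = 2\<close>, where the power nonlinearity contributes with ratio
  \<open>2\<^sup>\<gamma> \<noteq> 1\<close>, gives \<open>Re \<eta> = 0\<close> and \<open>\<eta>\<^sub>t = 0\<close>; integrating over the connected punctured
  \<open>\<psi>\<close>-plane and along the coordinate lines then yields \<open>Q = c\<^sub>1 M + c\<^sub>2 G(1) + c\<^sub>3 G(t)\<close>.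
  Conversely, for such \<open>Q\<close> the linearised equation is \<open>\<i>(c\<^sub>1 + c\<^sub>3 x/2)\<close> times the equation.\<close>

lemma smooth_on_differentiable: "smooth_on S f \<Longrightarrow> z \<in> S \<Longrightarrow> f differentiable (at z)"
  by (erule smooth_on.cases) auto

lemma smooth_on_frechet_derivative:
  "smooth_on S f \<Longrightarrow> smooth_on S (\<lambda>z. frechet_derivative f (at z) v)"
  by (erule smooth_on.cases) auto

lemma has_derivative_smooth_on:
  "smooth_on S f \<Longrightarrow> z \<in> S \<Longrightarrow> (f has_derivative frechet_derivative f (at z)) (at z)"
  using smooth_on_differentiable frechet_derivative_works by blast

lemma smooth_on_if_closed:
  assumes "P f"
    and "\<And>f z. P f \<Longrightarrow> z \<in> S \<Longrightarrow> f differentiable (at z)"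
    and "\<And>f v. P f \<Longrightarrow> P (\<lambda>z. frechet_derivative f (at z) v)"
  shows "smooth_on S f"
  using assms by (coinduction arbitrary: f rule: smooth_on.coinduct) auto

lemma smooth_on_affine:
  fixes L :: "'a::real_normed_vector \<Rightarrow> 'b::real_normed_vector"
  assumes "bounded_linear L"
  shows "smooth_on S (\<lambda>z. c + L z)"
proof (rule smooth_on_if_closed[where P="\<lambda>f. \<exists>c L. bounded_linear L \<and> f = (\<lambda>z. c + L z)"])
  have deriv: "((\<lambda>z. c + L z) has_derivative L) (at z)" if "bounded_linear L" for c L z
    using has_derivative_add[OF has_derivative_const bounded_linear_imp_has_derivative[OF that]]
    by simp
  show "\<exists>c' L'. bounded_linear L' \<and> (\<lambda>z. c + L z) = (\<lambda>z. c' + L' z)"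
    using assms by blast
  show "f differentiable (at z)" if "\<exists>c L. bounded_linear L \<and> f = (\<lambda>z. c + L z)" for f z
    using that deriv differentiableI by blast
  show "\<exists>c L. bounded_linear L \<and> (\<lambda>z. frechet_derivative f (at z) v) = (\<lambda>z. c + L z)"
    if affine: "\<exists>c L. bounded_linear L \<and> f = (\<lambda>z. c + L z)" for f :: "'a \<Rightarrow> 'b" and v
  proof -
    obtain c L where L: "bounded_linear L" and f: "f = (\<lambda>z. c + L z)" using affine by blast
    have "frechet_derivative f (at z) = L" for z
      unfolding f by (rule frechet_derivative_at[OF deriv[OF L], symmetric])
    then show ?thesis
      by (intro exI[of _ "L v"] exI[of _ "\<lambda>_. 0"]) (simp add: bounded_linear_zero)
  qed
qed

lemma smooth_on_const: "smooth_on S (\<lambda>z. c)"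
  using smooth_on_affine[of "\<lambda>_. 0" S c] by (simp add: bounded_linear_zero)

lemma frechet_derivative_cong_open:
  assumes "open X" "x \<in> X" "\<And>y. y \<in> X \<Longrightarrow> f y = g y"
  shows "frechet_derivative f (at x) = frechet_derivative g (at x)"
proof -
  have "(f has_derivative f') (at x) \<longleftrightarrow> (g has_derivative f') (at x)" for f'
    using has_derivative_transform_within_open[OF _ assms(1,2)] assms(3) by metis
  then show ?thesis unfolding frechet_derivative_def by simp
qed

lemma has_derivative_unique_open:
  assumes "(F has_derivative F') (at z)" "(G has_derivative G') (at z)" "open S" "z \<in> S"
    "\<And>y. y \<in> S \<Longrightarrow> F y = G y"
  shows "F' = G'"
proof -
  have "(G has_derivative F') (at z)"
    using has_derivative_transform_within_open[OF assms(1) assms(3,4)] assms(5) by simp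
  then show ?thesis using assms(2) by (rule has_derivative_unique)
qed

lemma has_derivative_compose_at:
  assumes "(f has_derivative f') (at x)" "f x = y" "(g has_derivative g') (at y)"
  shows "((\<lambda>x. g (f x)) has_derivative (\<lambda>h. g' (f' h))) (at x)"
  using has_derivative_compose[OF assms(1), of g g'] assms(2,3) by simp

lemma affine_if_has_derivative_const:
  fixes f :: "real \<Rightarrow> 'b::real_normed_vector"
  assumes "\<And>s. (f has_derivative (\<lambda>h. h *\<^sub>R c)) (at s)"
  shows "f s = f 0 + s *\<^sub>R c"
proof -
  have "\<exists>k. \<forall>x\<in>UNIV. f x - x *\<^sub>R c = k"
  proof (rule has_derivative_zero_constant)
    fix x :: real
    have "((\<lambda>x. f x - x *\<^sub>R c) has_derivative (\<lambda>h. h *\<^sub>R c - h *\<^sub>R c)) (at x)"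
      by (rule has_derivative_diff[OF assms has_derivative_scaleR_left[OF has_derivative_ident]])
    then show "((\<lambda>x. f x - x *\<^sub>R c) has_derivative (\<lambda>h. 0)) (at x within UNIV)" by simp
  qed simp
  then obtain k where "\<And>x. f x - x *\<^sub>R c = k" by blast
  from this[of s] this[of 0] show ?thesis by (simp add: algebra_simps)
qed

lemma constant_on_punctured_plane:
  fixes g :: "complex \<Rightarrow> 'b::banach"
  assumes "\<And>w. w \<noteq> 0 \<Longrightarrow> (g has_derivative (\<lambda>h. 0)) (at w)" "w \<noteq> 0"
  shows "g w = g 1"
proof -
  have "g constant_on (- {0})"
  proof (rule has_derivative_zero_connected_constant_on[where K="{}"])
    show "connected (- {0::complex})" by (rule connected_punctured_universe) simp
    show "continuous_on (- {0}) g"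
      by (intro continuous_at_imp_continuous_on ballI has_derivative_continuous[OF assms(1)]) simp
    show "\<forall>x\<in>- {0} - {}. (g has_derivative (\<lambda>h. 0)) (at x within - {0})"
      using assms(1) has_derivative_at_withinI by blast
  qed auto
  then show ?thesis using assms(2) unfolding constant_on_def by force
qed

lemma norm_increment_le_of_derivative_bound:
  fixes \<psi> :: "real \<Rightarrow> 'b::real_normed_vector"
  assumes "\<And>s. s \<in> {0..h} \<Longrightarrow> (\<psi> has_derivative (\<lambda>k. k *\<^sub>R \<psi>' s)) (at s)"
    and "\<And>s. s \<in> {0..h} \<Longrightarrow> norm (\<psi>' s) \<le> B" and "0 \<le> h"
  shows "norm (\<psi> h - \<psi> 0) \<le> B * h"
proof -
  have "norm (\<psi> h - \<psi> 0) \<le> B * norm (h - 0)"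
  proof (rule differentiable_bound[where f'="\<lambda>s k. k *\<^sub>R \<psi>' s"])
    fix x assume x: "x \<in> {0..h}"
    show "(\<psi> has_derivative (\<lambda>k. k *\<^sub>R \<psi>' x)) (at x within {0..h})"
      by (rule has_derivative_at_withinI[OF assms(1)[OF x]])
    show "onorm (\<lambda>k. k *\<^sub>R \<psi>' x) \<le> B"
    proof (rule onorm_le)
      show "norm (k *\<^sub>R \<psi>' x) \<le> B * norm k" for k
        using mult_left_mono[OF assms(2)[OF x], of "\<bar>k\<bar>"] by (simp add: mult.commute)
    qed
  qed (use assms(3) in auto)
  then show ?thesis using assms(3) by simp
qed

lemma norm_diff_le_of_linear_approx:
  assumes "linear L"
    and "\<And>y. norm (y - p) < d \<Longrightarrow> norm (A y - A p - L (y - p)) \<le> e * norm (y - p)"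
    and "norm (y - p) < d" "norm (z - p) < d"
  shows "norm (A y - A z - L (y - z)) \<le> e * norm (y - p) + e * norm (z - p)"
proof -
  have "A y - A z - L (y - z) = (A y - A p - L (y - p)) - (A z - A p - L (z - p))"
    using linear_diff[OF assms(1), of "y - p" "z - p"] by (simp add: algebra_simps)
  then have "norm (A y - A z - L (y - z))
      \<le> norm (A y - A p - L (y - p)) + norm (A z - A p - L (z - p))"
    by (metis norm_triangle_ineq4)
  then show ?thesis using assms(2)[OF assms(3)] assms(2)[OF assms(4)] by linarith
qed

text \<open>Both mixed derivatives are limits of the same second difference quotient
  \<open>(f(p + h e\<^sub>1 + h e\<^sub>2) - f(p + h e\<^sub>1) - f(p + h e\<^sub>2) + f p) / h\<^sup>2\<close>; the estimate comes
  from the mean value theorem applied in the direction \<open>e\<^sub>1\<close>.\<close>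

lemma second_difference_approx:
  fixes f :: "'a::real_normed_vector \<Rightarrow> 'b::real_normed_vector"
  assumes fd: "\<And>q. (f has_derivative Df q) (at q)"
    and dA: "((\<lambda>q. Df q e1) has_derivative DA) (at p)"
    and n1: "norm e1 = 1" and n2: "norm e2 = 1" and e: "e > 0"
  shows "\<exists>\<delta>>0. \<forall>h. 0 < h \<and> h < \<delta> \<longrightarrow>
     norm (f (p + h *\<^sub>R e1 + h *\<^sub>R e2) - f (p + h *\<^sub>R e1) - f (p + h *\<^sub>R e2) + f p
       - (h * h) *\<^sub>R DA e2) \<le> 3 * e * (h * h)"
proof -
  let ?A = "\<lambda>q. Df q e1"
  have linA: "linear DA" using dA has_derivative_linear by blast
  obtain d where d: "d > 0"
    and approx: "\<And>y. norm (y - p) < d \<Longrightarrow> norm (?A y - ?A p - DA (y - p)) \<le> e * norm (y - p)"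
    using dA e unfolding has_derivative_at_alt by blast
  have lin: "\<And>q. linear (Df q)" using fd has_derivative_linear by blast
  show ?thesis
  proof (intro exI[of _ "d/2"] conjI allI impI)
    fix h :: real assume "0 < h \<and> h < d / 2"
    then have h0: "0 < h" and hd: "h < d / 2" by auto
    define \<psi> where "\<psi> s = f (p + s *\<^sub>R e1 + h *\<^sub>R e2) - f (p + s *\<^sub>R e1) - s *\<^sub>R (h *\<^sub>R DA e2)" for s
    define \<psi>' where "\<psi>' s = ?A (p + s *\<^sub>R e1 + h *\<^sub>R e2) - ?A (p + s *\<^sub>R e1) - h *\<^sub>R DA e2" for s
    have "norm (\<psi> h - \<psi> 0) \<le> (3 * e * h) * h"
    proof (rule norm_increment_le_of_derivative_bound)
      fix s
      have "(\<psi> has_derivative (\<lambda>k. Df (p + s *\<^sub>R e1 + h *\<^sub>R e2) (k *\<^sub>R e1)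
          - Df (p + s *\<^sub>R e1) (k *\<^sub>R e1) - k *\<^sub>R (h *\<^sub>R DA e2))) (at s)"
        unfolding \<psi>_def[abs_def]
        by (intro has_derivative_diff has_derivative_compose[OF _ fd]
            has_derivative_scaleR_left[OF has_derivative_ident])
          (auto intro!: derivative_eq_intros)
      then show "(\<psi> has_derivative (\<lambda>k. k *\<^sub>R \<psi>' s)) (at s)"
        unfolding \<psi>'_def by (simp add: linear_scale[OF lin] scaleR_diff_right)
    next
      fix s assume "s \<in> {0..h}"
      then have s0: "0 \<le> s" and sh: "s \<le> h" by auto
      let ?y1 = "p + s *\<^sub>R e1 + h *\<^sub>R e2" and ?y2 = "p + s *\<^sub>R e1"
      have ny1: "norm (?y1 - p) \<le> 2 * h"
        using norm_triangle_ineq[of "s *\<^sub>R e1" "h *\<^sub>R e2"] n1 n2 s0 sh h0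
        by (simp add: algebra_simps)
      have ny2: "norm (?y2 - p) \<le> h" using n1 s0 sh by simp
      have "norm (?A ?y1 - ?A ?y2 - DA (?y1 - ?y2)) \<le> e * norm (?y1 - p) + e * norm (?y2 - p)"
        by (rule norm_diff_le_of_linear_approx[OF linA approx]) (use ny1 ny2 hd h0 in auto)
      then have "norm (\<psi>' s) \<le> e * norm (?y1 - p) + e * norm (?y2 - p)"
        by (simp add: \<psi>'_def linear_scale[OF linA])
      also have "\<dots> \<le> 3 * e * h"
        using mult_left_mono[OF ny1, of e] mult_left_mono[OF ny2, of e] e by linarith
      finally show "norm (\<psi>' s) \<le> 3 * e * h" .
    qed (use h0 in simp)
    then show "norm (f (p + h *\<^sub>R e1 + h *\<^sub>R e2) - f (p + h *\<^sub>R e1) - f (p + h *\<^sub>R e2) + f p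
        - (h * h) *\<^sub>R DA e2) \<le> 3 * e * (h * h)"
      unfolding \<psi>_def by (simp add: algebra_simps)
  qed (use d in simp)
qed

lemma mixed_partials_eq:
  fixes f :: "real \<times> real \<Rightarrow> 'b::real_normed_vector"
  assumes fd: "\<And>q. (f has_derivative Df q) (at q)"
    and dA: "((\<lambda>q. Df q (1,0)) has_derivative DA) (at p)"
    and dB: "((\<lambda>q. Df q (0,1)) has_derivative DB) (at p)"
  shows "DA (0,1) = DB (1,0)"
proof (rule ccontr)
  assume ne: "DA (0,1) \<noteq> DB (1,0)"
  define e where "e = norm (DA (0,1) - DB (1,0)) / 12"
  have e: "e > 0" using ne by (simp add: e_def)
  define \<Delta> where "\<Delta> h = f (p + h *\<^sub>R (1,0) + h *\<^sub>R (0,1)) - f (p + h *\<^sub>R (1,0))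
    - f (p + h *\<^sub>R (0,1)) + f p" for h
  obtain d1 where d1: "d1 > 0"
    and h1: "\<And>h. 0 < h \<and> h < d1 \<Longrightarrow> norm (\<Delta> h - (h * h) *\<^sub>R DA (0,1)) \<le> 3 * e * (h * h)"
    using second_difference_approx[OF fd dA _ _ e, of "(0,1)"] unfolding \<Delta>_def
    by (auto simp: norm_prod_def)
  obtain d2 where d2: "d2 > 0"
    and h2: "\<And>h. 0 < h \<and> h < d2 \<Longrightarrow> norm (\<Delta> h - (h * h) *\<^sub>R DB (1,0)) \<le> 3 * e * (h * h)"
    using second_difference_approx[OF fd dB _ _ e, of "(1,0)"] unfolding \<Delta>_def
    by (auto simp: norm_prod_def algebra_simps)
  define h where "h = min d1 d2 / 2"
  have h0: "0 < h" and "h < d1" "h < d2" using d1 d2 by (auto simp: h_def)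
  have "norm ((\<Delta> h - (h * h) *\<^sub>R DB (1,0)) - (\<Delta> h - (h * h) *\<^sub>R DA (0,1)))
      \<le> norm (\<Delta> h - (h * h) *\<^sub>R DB (1,0)) + norm (\<Delta> h - (h * h) *\<^sub>R DA (0,1))"
    by (rule norm_triangle_ineq4)
  also have "\<dots> \<le> 6 * e * (h * h)" using h1[of h] h2[of h] h0 \<open>h < d1\<close> \<open>h < d2\<close> by simp
  finally have "(h * h) * norm (DA (0,1) - DB (1,0)) \<le> (h * h) * (6 * e)"
    by (simp add: algebra_simps flip: scaleR_diff_right)
  then have "norm (DA (0,1) - DB (1,0)) \<le> 6 * e" using h0 by simp
  then show False using e unfolding e_def by simp
qed

definition power_term_deriv :: "real \<Rightarrow> complex \<Rightarrow> complex \<Rightarrow> complex" where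
  "power_term_deriv \<gamma> w h =
     of_real (cmod w powr \<gamma>) * h + of_real (cmod w powr \<gamma> * (inner h (sgn w) * \<gamma> / cmod w)) * w"

lemma has_derivative_NLS:
  assumes V: "(V has_derivative V') (at t)" and u: "u \<noteq> 0"
  shows "(NLS \<gamma> V has_derivative (\<lambda>(dt, dx, du, dut, duxx).
            \<i> * dut + duxx + power_term_deriv \<gamma> u du + V' dt * u + V t * du)) (at (t, x, u, ut, uxx))"
proof -
  let ?z = "(t, x, u, ut, uxx)"
  have NLS_eq: "NLS \<gamma> V = (\<lambda>z. \<i> * fst (snd (snd (snd z))) + snd (snd (snd (snd z)))
      + of_real (norm (fst (snd (snd z))) powr \<gamma>) * fst (snd (snd z)) + V (fst z) * fst (snd (snd z)))"
    by (auto simp: NLS_def fun_eq_iff)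
  have norm: "((\<lambda>z. norm (fst (snd (snd z)))) has_derivative (\<lambda>h. inner (fst (snd (snd h))) (sgn u))) (at ?z)"
    by (rule has_derivative_compose_at[OF _ _ has_derivative_norm[OF u]]) (auto intro!: derivative_eq_intros)
  have pot: "((\<lambda>z. V (fst z)) has_derivative (\<lambda>h. V' (fst h))) (at ?z)"
    by (rule has_derivative_compose_at[OF _ _ V]) (auto intro!: derivative_eq_intros)
  show ?thesis
    unfolding NLS_eq
    by (rule has_derivative_eq_rhs)
      (auto intro!: derivative_eq_intros norm pot simp: u fun_eq_iff power_term_deriv_def)
qed

lemma frechet_derivative_NLS:
  assumes "(V has_derivative V') (at t)" "u \<noteq> 0"
  shows "frechet_derivative (NLS \<gamma> V) (at (t, x, u, ut, uxx)) (dt, dx, du, dut, duxx)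
     = \<i> * dut + duxx + power_term_deriv \<gamma> u du + V' dt * u + V t * du"
  using frechet_derivative_at[OF has_derivative_NLS[OF assms]] by simp

definition jet_poly :: "real \<Rightarrow> real \<Rightarrow> complex \<Rightarrow> complex \<Rightarrow> complex \<Rightarrow> complex \<Rightarrow> real \<times> real \<Rightarrow> complex"
  where "jet_poly t0 x0 w a b c =
    (\<lambda>q. w + a * of_real (fst q - t0) + b * of_real (snd q - x0) + c * of_real ((snd q - x0)^2 / 2))"

definition jet_poly_x :: "complex \<Rightarrow> complex \<Rightarrow> real \<Rightarrow> real \<times> real \<Rightarrow> complex" where
  "jet_poly_x b c x0 = (\<lambda>q. b + c * of_real (snd q - x0))"

lemma has_derivative_jet_poly:
  "(jet_poly t0 x0 w a b c has_derivative
     (\<lambda>h. a * of_real (fst h) + jet_poly_x b c x0 q * of_real (snd h))) (at q)"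
  unfolding jet_poly_def jet_poly_x_def
  by (rule has_derivative_eq_rhs) (auto intro!: derivative_eq_intros simp: field_simps power2_eq_square)

lemma has_derivative_jet_poly_x: "(jet_poly_x b c x0 has_derivative (\<lambda>h. c * of_real (snd h))) (at q)"
  unfolding jet_poly_x_def by (auto intro!: derivative_eq_intros)

lemma pd_jet_poly:
  "pdt (jet_poly t0 x0 w a b c) = (\<lambda>q. a)" "pdx (jet_poly t0 x0 w a b c) = jet_poly_x b c x0"
  using frechet_derivative_at[OF has_derivative_jet_poly] by (auto simp: pdt_def pdx_def)

lemma pd_jet_poly_x: "pdt (jet_poly_x b c x0) = (\<lambda>q. 0)" "pdx (jet_poly_x b c x0) = (\<lambda>q. c)"
  using frechet_derivative_at[OF has_derivative_jet_poly_x] by (auto simp: pdt_def pdx_def)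

lemma pd_const: "pdt (\<lambda>q. k) = (\<lambda>q. 0)" "pdx (\<lambda>q. k) = (\<lambda>q. 0)"
  by (auto simp: pdt_def pdx_def)

lemma higher_pd_jet_poly:
  "pdx (pdx (jet_poly t0 x0 w a b c)) = (\<lambda>q. c)"
  "pdt (pdt (jet_poly t0 x0 w a b c)) = (\<lambda>q. 0)"
  "pdx (pdt (jet_poly t0 x0 w a b c)) = (\<lambda>q. 0)"
  "pdt (pdx (pdx (jet_poly t0 x0 w a b c))) = (\<lambda>q. 0)"
  "pdx (pdx (pdx (jet_poly t0 x0 w a b c))) = (\<lambda>q. 0)"
  by (simp_all add: pd_jet_poly pd_jet_poly_x pd_const)

lemma jet_poly_at: "jet_poly t0 x0 w a b c (t0, x0) = w"
  by (simp add: jet_poly_def)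

lemma jet_jet_poly: "jet (jet_poly t0 x0 w a b c) (t0, x0) = (t0, x0, w, a, c)"
  by (simp add: jet_def jet_poly_at pd_jet_poly pd_jet_poly_x)

lemma smooth_on_jet_poly: "smooth_on UNIV (jet_poly t0 x0 w a b c)"
proof (rule smooth_on.intros)
  show "\<forall>z\<in>UNIV. jet_poly t0 x0 w a b c differentiable at z"
    using has_derivative_jet_poly differentiableI by blast
  show "\<forall>v. smooth_on UNIV (\<lambda>z. frechet_derivative (jet_poly t0 x0 w a b c) (at z) v)"
  proof
    fix v :: "real \<times> real"
    have "(\<lambda>z. frechet_derivative (jet_poly t0 x0 w a b c) (at z) v) =
        (\<lambda>z. (a * of_real (fst v) + (b - c * of_real x0) * of_real (snd v))
          + c * of_real (snd v) * of_real (snd z))"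
      by (simp add: frechet_derivative_at[OF has_derivative_jet_poly, symmetric] jet_poly_x_def
          algebra_simps)
    moreover have "bounded_linear (\<lambda>z::real \<times> real. c * of_real (snd v) * of_real (snd z))"
      using bounded_linear_mult_right[of "c * of_real (snd v)"]
        bounded_linear_compose[OF bounded_linear_of_real bounded_linear_snd] bounded_linear_compose
      by (auto simp: o_def)
    ultimately show "smooth_on UNIV (\<lambda>z. frechet_derivative (jet_poly t0 x0 w a b c) (at z) v)"
      using smooth_on_affine by metis
  qed
qed

lemma has_derivative_graph:
  assumes "(F has_derivative F') (at (pt u q))" and "(u has_derivative u') (at q)"
  shows "((\<lambda>q. F (pt u q)) has_derivative (\<lambda>h. F' (fst h, snd h, u' h))) (at q)"
proof -
  have "(pt u has_derivative (\<lambda>h. (fst h, snd h, u' h))) (at q)"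
    unfolding pt_def[abs_def] by (auto intro!: derivative_eq_intros assms(2))
  then show ?thesis using has_derivative_compose assms(1) by blast
qed

lemma open_D: "open D"
proof -
  have "D = UNIV \<times> UNIV \<times> (- {0})" by (auto simp: D_def)
  then show ?thesis by (metis open_Times open_UNIV open_Compl closed_singleton)
qed

lemma pt_in_D: "u q \<noteq> 0 \<Longrightarrow> pt u q \<in> D"
  by (simp add: pt_def D_def)

lemma in_D: "w \<noteq> 0 \<Longrightarrow> (t, x, w) \<in> D"
  by (simp add: D_def)

lemma unit_in_D: "(t, x, 1) \<in> D"
  by (simp add: D_def)

definition DQ :: "vfield \<Rightarrow> real \<times> real \<times> complex \<Rightarrow> real \<times> real \<times> complex \<Rightarrow> real \<times> real \<times> complex"
  where "DQ Q z h = frechet_derivative Q (at z) h"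

definition D2Q :: "vfield \<Rightarrow> real \<times> real \<times> complex \<Rightarrow> real \<times> real \<times> complex
    \<Rightarrow> real \<times> real \<times> complex \<Rightarrow> real \<times> real \<times> complex"
  where "D2Q Q e z h = frechet_derivative (\<lambda>z. DQ Q z e) (at z) h"

abbreviation "Dxi Q z h \<equiv> fst (snd (DQ Q z h))"
abbreviation "Deta Q z h \<equiv> snd (snd (DQ Q z h))"
abbreviation "D2xi Q e z h \<equiv> fst (snd (D2Q Q e z h))"
abbreviation "D2eta Q e z h \<equiv> snd (snd (D2Q Q e z h))"

lemma has_derivative_DQ: "smooth_on D Q \<Longrightarrow> z \<in> D \<Longrightarrow> (Q has_derivative DQ Q z) (at z)"
  unfolding DQ_def[abs_def] by (rule has_derivative_smooth_on)

lemma has_derivative_D2Q: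
  "smooth_on D Q \<Longrightarrow> z \<in> D \<Longrightarrow> ((\<lambda>z. DQ Q z e) has_derivative D2Q Q e z) (at z)"
  unfolding D2Q_def[abs_def] DQ_def
  by (rule has_derivative_smooth_on[OF smooth_on_frechet_derivative])

lemma linear_DQ: "smooth_on D Q \<Longrightarrow> z \<in> D \<Longrightarrow> linear (DQ Q z)"
  using has_derivative_DQ has_derivative_linear by blast

lemma linear_D2Q: "smooth_on D Q \<Longrightarrow> z \<in> D \<Longrightarrow> linear (D2Q Q e z)"
  using has_derivative_D2Q has_derivative_linear by blast

lemma tangent_decompose:
  "((0::real), (1::real), \<beta>::complex) = (0,1,0) + Re \<beta> *\<^sub>R (0,0,1) + Im \<beta> *\<^sub>R (0,0,\<i>)"
  by (simp add: complex_eq_iff)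

lemma smooth_on_shifted_id: "smooth_on UNIV (\<lambda>t::real. complex_of_real (t - t0))"
proof -
  have "smooth_on UNIV (\<lambda>t::real. (- complex_of_real t0) + of_real t)"
    by (rule smooth_on_affine) (rule bounded_linear_of_real)
  then show ?thesis by simp
qed

lemma tau_vanishes:
  assumes lie: "\<And>V. smooth_on UNIV V \<Longrightarrow> lie_sym \<gamma> V Q" and "z \<in> D"
  shows "vt Q z = 0"
proof -
  obtain t0 x0 w where z: "z = (t0, x0, w)" and w: "w \<noteq> 0" using \<open>z \<in> D\<close> by (cases z) (auto simp: D_def)
  define a where "a = \<i> * of_real (cmod w powr \<gamma>) * w"
  define u where "u = jet_poly t0 x0 w a 0 0"
  let ?V1 = "\<lambda>_::real. 0::complex" and ?V2 = "\<lambda>t::real. complex_of_real (t - t0)"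
  have u: "smooth_on UNIV u" "u (t0,x0) \<noteq> 0" "jet u (t0,x0) = (t0,x0,w,a,0)"
    using w smooth_on_jet_poly jet_jet_poly by (simp_all add: u_def jet_poly_at)
  obtain et exx where pr: "prQ Q u (t0,x0) = (vt Q z, vx Q z, vu Q z, et, exx)"
    by (simp add: prQ_def pt_def u_def jet_poly_at z)
  have V1: "(?V1 has_derivative (\<lambda>h. 0)) (at t0)" and V2: "(?V2 has_derivative of_real) (at t0)"
    by (auto intro!: derivative_eq_intros)
  have "NLS \<gamma> ?V1 (jet u (t0,x0)) = 0" and "NLS \<gamma> ?V2 (jet u (t0,x0)) = 0"
    using u(3) by (simp_all add: NLS_def a_def mult.assoc[symmetric])
  then have "frechet_derivative (NLS \<gamma> ?V1) (at (jet u (t0,x0))) (prQ Q u (t0,x0)) = 0"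
    and "frechet_derivative (NLS \<gamma> ?V2) (at (jet u (t0,x0))) (prQ Q u (t0,x0)) = 0"
    using lie[OF smooth_on_const] lie[OF smooth_on_shifted_id] u(1,2) unfolding lie_sym_def by blast+
  then have "of_real (vt Q z) * w = 0"
    unfolding u(3) pr frechet_derivative_NLS[OF V1 w] frechet_derivative_NLS[OF V2 w] by simp
  then show ?thesis using w by simp
qed

text \<open>Once \<open>\<tau> = 0\<close>, the prolongation coefficients \<open>\<eta>\<^sup>t\<close> and \<open>\<eta>\<^sup>x\<^sup>x\<close> evaluated on the polynomial with
  2-jet \<open>(w, a, b, c)\<close> at a point with \<open>\<psi> = w\<close> only depend on the first and second derivatives
  of \<open>Q\<close> at \<open>z = (t, x, w)\<close>; the \<open>\<psi>\<close>-direction of \<open>D\<close> is split into the real directions \<open>1\<close> and \<open>\<i>\<close>.\<close>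

definition char_t :: "vfield \<Rightarrow> real \<times> real \<times> complex \<Rightarrow> complex \<Rightarrow> complex \<Rightarrow> complex" where
  "char_t Q z a b = Deta Q z (1,0,a) - of_real (Dxi Q z (1,0,a)) * b"

definition char_xx :: "vfield \<Rightarrow> real \<times> real \<times> complex \<Rightarrow> complex \<Rightarrow> complex \<Rightarrow> complex" where
  "char_xx Q z b c =
     D2eta Q (0,1,0) z (0,1,b) + Re c *\<^sub>R Deta Q z (0,0,1) + Re b *\<^sub>R D2eta Q (0,0,1) z (0,1,b)
     + Im c *\<^sub>R Deta Q z (0,0,\<i>) + Im b *\<^sub>R D2eta Q (0,0,\<i>) z (0,1,b)
     - (of_real (Dxi Q z (0,1,b)) * c
        + of_real (D2xi Q (0,1,0) z (0,1,b) + Re c * Dxi Q z (0,0,1) + Re b * D2xi Q (0,0,1) z (0,1,b)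
            + Im c * Dxi Q z (0,0,\<i>) + Im b * D2xi Q (0,0,\<i>) z (0,1,b)) * b
        + of_real (Dxi Q z (0,1,0) + Re b * Dxi Q z (0,0,1) + Im b * Dxi Q z (0,0,\<i>)) * c)"

locale jet_poly_probe =
  fixes Q :: vfield and t0 x0 :: real and w a b c :: complex
  assumes smooth: "smooth_on D Q" and tau_zero: "\<forall>z\<in>D. vt Q z = 0" and w_nonzero: "w \<noteq> 0"
begin

abbreviation "u \<equiv> jet_poly t0 x0 w a b c"
abbreviation "p \<equiv> (t0, x0)"
abbreviation "z0 \<equiv> (t0, x0, w)"

definition "N = {q. u q \<noteq> 0}"
definition "graph_tangent q h = (fst h, snd h, a * of_real (fst h) + jet_poly_x b c x0 q * of_real (snd h))"

definition "char_probe q = vu Q (pt u q) - of_real (vx Q (pt u q)) * jet_poly_x b c x0 q"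

definition "char_probe_x q =
  Deta Q (pt u q) (0,1,0) + Re (jet_poly_x b c x0 q) *\<^sub>R Deta Q (pt u q) (0,0,1)
  + Im (jet_poly_x b c x0 q) *\<^sub>R Deta Q (pt u q) (0,0,\<i>)
  - (of_real (vx Q (pt u q)) * c
     + of_real (Dxi Q (pt u q) (0,1,0) + Re (jet_poly_x b c x0 q) * Dxi Q (pt u q) (0,0,1)
         + Im (jet_poly_x b c x0 q) * Dxi Q (pt u q) (0,0,\<i>)) * jet_poly_x b c x0 q)"

lemma open_N: "open N"
proof -
  have "N = u -` (- {0})" by (auto simp: N_def)
  then show ?thesis
    using continuous_open_vimage[OF open_Compl[OF closed_singleton]]
      has_derivative_continuous[OF has_derivative_jet_poly] by metis
qed

lemma p_in_N: "p \<in> N" using w_nonzero by (simp add: N_def jet_poly_at)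

lemma pt_in_D_N: "q \<in> N \<Longrightarrow> pt u q \<in> D" by (simp add: N_def pt_in_D)

lemma pt_p: "pt u p = z0" by (simp add: pt_def jet_poly_at)

lemma z0_in_D: "z0 \<in> D" using w_nonzero by (simp add: D_def)

lemma jet_poly_x_p: "jet_poly_x b c x0 p = b" by (simp add: jet_poly_x_def)

lemma charQ_eq_char_probe: "q \<in> N \<Longrightarrow> charQ Q u q = char_probe q"
  using tau_zero pt_in_D_N[of q] by (simp add: charQ_def char_probe_def pd_jet_poly)

lemma has_derivative_along_graph:
  assumes "(F has_derivative F') (at (pt u q))"
  shows "((\<lambda>q. F (pt u q)) has_derivative (\<lambda>h. F' (graph_tangent q h))) (at q)"
  using has_derivative_graph[OF assms has_derivative_jet_poly] by (simp add: graph_tangent_def)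

lemma has_derivative_Q_graph:
  "q \<in> N \<Longrightarrow> ((\<lambda>q. Q (pt u q)) has_derivative (\<lambda>h. DQ Q (pt u q) (graph_tangent q h))) (at q)"
  by (rule has_derivative_along_graph[OF has_derivative_DQ[OF smooth pt_in_D_N]])

lemma has_derivative_DQ_graph:
  "((\<lambda>q. DQ Q (pt u q) e) has_derivative (\<lambda>h. D2Q Q e z0 (graph_tangent p h))) (at p)"
  using has_derivative_along_graph[of "\<lambda>z. DQ Q z e"] has_derivative_D2Q[OF smooth z0_in_D] pt_p
  by simp

lemma has_derivative_char_probe:
  "q \<in> N \<Longrightarrow> (char_probe has_derivative (\<lambda>h. Deta Q (pt u q) (graph_tangent q h)
    - (of_real (vx Q (pt u q)) * (c * of_real (snd h))
       + of_real (Dxi Q (pt u q) (graph_tangent q h)) * jet_poly_x b c x0 q))) (at q)"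
  unfolding char_probe_def[abs_def] vu_def vx_def
  by (rule derivative_eq_intros has_derivative_Q_graph has_derivative_jet_poly_x refl | assumption)+

lemma pdt_charQ: "pdt (charQ Q u) p = char_t Q z0 a b"
proof -
  have "pdt (charQ Q u) p = pdt char_probe p"
    unfolding pdt_def
    using frechet_derivative_cong_open[OF open_N p_in_N] charQ_eq_char_probe by metis
  also have "\<dots> = char_t Q z0 a b"
    by (simp add: pdt_def frechet_derivative_at[OF has_derivative_char_probe[OF p_in_N], symmetric]
        char_t_def graph_tangent_def pt_p jet_poly_x_p)
  finally show ?thesis .
qed

lemma pdx_charQ: "q \<in> N \<Longrightarrow> pdx (charQ Q u) q = char_probe_x q"
proof -
  assume q: "q \<in> N"
  have lin: "linear (DQ Q (pt u q))" using linear_DQ[OF smooth pt_in_D_N[OF q]] .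
  have "pdx (charQ Q u) q = pdx char_probe q"
    unfolding pdx_def using frechet_derivative_cong_open[OF open_N q] charQ_eq_char_probe by metis
  moreover have "DQ Q (pt u q) (0, 1, jet_poly_x b c x0 q) = DQ Q (pt u q) (0,1,0)
      + Re (jet_poly_x b c x0 q) *\<^sub>R DQ Q (pt u q) (0,0,1) + Im (jet_poly_x b c x0 q) *\<^sub>R DQ Q (pt u q) (0,0,\<i>)"
    by (subst tangent_decompose) (simp only: linear_add[OF lin] linear_scale[OF lin])
  then have "pdx char_probe q = char_probe_x q"
    by (simp add: pdx_def frechet_derivative_at[OF has_derivative_char_probe[OF q], symmetric]
        char_probe_x_def graph_tangent_def)
  ultimately show ?thesis by simp
qed

lemma pdxx_charQ: "pdx (pdx (charQ Q u)) p = char_xx Q z0 b c"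
proof -
  have deriv: "(char_probe_x has_derivative (\<lambda>h. D2eta Q (0,1,0) z0 (graph_tangent p h)
     + (Re b *\<^sub>R D2eta Q (0,0,1) z0 (graph_tangent p h) + Re (c * of_real (snd h)) *\<^sub>R Deta Q z0 (0,0,1))
     + (Im b *\<^sub>R D2eta Q (0,0,\<i>) z0 (graph_tangent p h) + Im (c * of_real (snd h)) *\<^sub>R Deta Q z0 (0,0,\<i>))
     - (of_real (vx Q z0) * 0 + of_real (Dxi Q z0 (graph_tangent p h)) * c
        + (of_real (Dxi Q z0 (0,1,0) + Re b * Dxi Q z0 (0,0,1) + Im b * Dxi Q z0 (0,0,\<i>)) * (c * of_real (snd h))
          + of_real (D2xi Q (0,1,0) z0 (graph_tangent p h)
             + (Re b * D2xi Q (0,0,1) z0 (graph_tangent p h) + Re (c * of_real (snd h)) * Dxi Q z0 (0,0,1))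
             + (Im b * D2xi Q (0,0,\<i>) z0 (graph_tangent p h) + Im (c * of_real (snd h)) * Dxi Q z0 (0,0,\<i>)))
            * b)))) (at p)"
    unfolding char_probe_x_def[abs_def] vx_def
    by (rule has_derivative_DQ_graph has_derivative_Q_graph[OF p_in_N, unfolded pt_p]
        has_derivative_jet_poly_x derivative_eq_intros refl
        | simp only: pt_p jet_poly_x_p)+
  have "pdx char_probe_x p = char_xx Q z0 b c"
    by (simp add: pdx_def frechet_derivative_at[OF deriv, symmetric] char_xx_def graph_tangent_def
        jet_poly_x_p algebra_simps)
  moreover have "frechet_derivative (pdx (charQ Q u)) (at p) = frechet_derivative char_probe_x (at p)"
    by (rule frechet_derivative_cong_open[OF open_N p_in_N]) (simp add: pdx_charQ)
  ultimately show ?thesis by (simp add: pdx_def)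
qed

lemma criterion_value:
  assumes V: "(V has_derivative V') (at t0)"
  shows "frechet_derivative (NLS \<gamma> V) (at (jet u p)) (prQ Q u p) =
    \<i> * char_t Q z0 a b + char_xx Q z0 b c + power_term_deriv \<gamma> w (vu Q z0) + V t0 * vu Q z0"
proof -
  have "vt Q z0 = 0" using tau_zero z0_in_D by blast
  then have "prQ Q u p = (0, vx Q z0, vu Q z0, char_t Q z0 a b, char_xx Q z0 b c)"
    by (simp add: prQ_def pt_p eta_t_def eta_xx_def higher_pd_jet_poly pd_const pdt_charQ pdxx_charQ)
  moreover have "V' 0 = 0" using V has_derivative_linear linear_0 by blast
  ultimately show ?thesis by (simp add: jet_jet_poly frechet_derivative_NLS[OF V w_nonzero])
qed

end

lemma determining_equation:
  assumes "smooth_on D Q" and "\<forall>z\<in>D. vt Q z = 0"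
    and lie: "lie_sym \<gamma> (\<lambda>_. V0) Q" and w: "w \<noteq> 0"
    and eq: "\<i> * a + c + of_real (cmod w powr \<gamma>) * w + V0 * w = 0"
  shows "\<i> * char_t Q (t0,x0,w) a b + char_xx Q (t0,x0,w) b c
    + power_term_deriv \<gamma> w (vu Q (t0,x0,w)) + V0 * vu Q (t0,x0,w) = 0"
proof -
  interpret jet_poly_probe Q t0 x0 w a b c using assms by unfold_locales
  have "NLS \<gamma> (\<lambda>_. V0) (jet u p) = 0" using eq by (simp add: jet_jet_poly NLS_def)
  then have "frechet_derivative (NLS \<gamma> (\<lambda>_. V0)) (at (jet u p)) (prQ Q u p) = 0"
    using lie smooth_on_jet_poly p_in_N unfolding lie_sym_def N_def by blast
  then show ?thesis using criterion_value[of "\<lambda>_. V0" "\<lambda>_. 0"] by simp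
qed

lemma has_derivative_eq_on_D:
  assumes "(F has_derivative F') (at z)" "(G has_derivative G') (at z)" "z \<in> D"
    and "\<And>t x w. w \<noteq> 0 \<Longrightarrow> F (t, x, w) = G (t, x, w)"
  shows "F' = G'"
  by (rule has_derivative_unique_open[OF assms(1,2) open_D assms(3)]) (use assms(4) in \<open>auto simp: D_def\<close>)

lemma has_derivative_line_t: "((\<lambda>s. (s, x, w)) has_derivative (\<lambda>h. (h, 0, 0))) (at s)"
  by (auto intro!: derivative_eq_intros simp: zero_prod_def)

lemma has_derivative_line_x: "((\<lambda>s. (t, s, w)) has_derivative (\<lambda>h. (0, h, 0))) (at s)"
  by (auto intro!: derivative_eq_intros simp: zero_prod_def)

lemma has_derivative_line_psi: "((\<lambda>w. (t, x, w)) has_derivative (\<lambda>h. (0, 0, h))) (at w)"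
  by (auto intro!: derivative_eq_intros simp: zero_prod_def)

lemma has_derivative_on_unit_section:
  assumes "(f has_derivative f') (at (t, x, 1))"
  shows "((\<lambda>y. f (fst y, fst (snd y), 1)) has_derivative (\<lambda>h. f' (fst h, fst (snd h), 0))) (at (t, x, w))"
  by (rule has_derivative_compose_at[OF _ _ assms]) (auto intro!: derivative_eq_intros)

lemma has_derivative_on_unit_axis:
  assumes "(f has_derivative f') (at (t, 0, 1))"
  shows "((\<lambda>y. f (fst y, 0, 1)) has_derivative (\<lambda>h. f' (fst h, 0, 0))) (at (t, x, w))"
  by (rule has_derivative_compose_at[OF _ _ assms]) (auto intro!: derivative_eq_intros simp: zero_prod_def)

lemma affine_coeff_eq_0: "(\<And>b. a + b * c = 0) \<Longrightarrow> (c::'a::ring_1) = 0"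
  by (metis add.right_neutral add_left_imp_eq mult_1 mult_zero_left)

lemma re_im_scaleR_combination: "Re b *\<^sub>R L + Im b *\<^sub>R (\<i> * L) = b * (L::complex)"
  by (simp add: scaleR_conv_of_real complex_eq_iff algebra_simps)

lemma power_term_deriv_1: "power_term_deriv \<gamma> 1 K = K + of_real (\<gamma> * Re K)"
  by (simp add: power_term_deriv_def)

lemma power_term_deriv_2:
  "power_term_deriv \<gamma> 2 (2 * K) = 2 * of_real (2 powr \<gamma>) * K + 2 * of_real (2 powr \<gamma> * \<gamma> * Re K)"
proof -
  have "sgn (2::complex) = 1" by (simp add: sgn_div_norm scaleR_conv_of_real)
  then show ?thesis by (simp add: power_term_deriv_def algebra_simps)
qed

locale symmetry_const_potentials =
  fixes Q :: vfield and \<gamma> :: real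
  assumes smooth: "smooth_on D Q" and tau_zero: "\<forall>z\<in>D. vt Q z = 0"
    and lie_const: "\<And>V0::complex. lie_sym \<gamma> (\<lambda>_. V0) Q"
begin

abbreviation "xi_t t \<equiv> Dxi Q (t,0,1) (1,0,0)"

lemma determining_eq:
  assumes "w \<noteq> 0"
  shows "\<i> * char_t Q (t,x,w) (\<i> * (c + of_real (cmod w powr \<gamma>) * w + v * w)) b + char_xx Q (t,x,w) b c
     + power_term_deriv \<gamma> w (vu Q (t,x,w)) + v * vu Q (t,x,w) = 0"
  by (rule determining_equation[OF smooth tau_zero lie_const assms]) (simp add: algebra_simps)

lemma char_t_diff:
  assumes "z \<in> D"
  shows "char_t Q z a b - char_t Q z a' b = Deta Q z (0,0,a - a') - of_real (Dxi Q z (0,0,a - a')) * b"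
proof -
  have "DQ Q z (1, 0, a) = DQ Q z (1, 0, a') + DQ Q z (0, 0, a - a')"
    using linear_add[OF linear_DQ[OF smooth assms], of "(1, 0, a')" "(0, 0, a - a')"] by simp
  then show ?thesis unfolding char_t_def by (simp add: algebra_simps)
qed

lemma determining_eq_diff:
  assumes w: "w \<noteq> 0"
  shows "\<i> * (char_t Q (t,x,w) (\<i> * (c + of_real (cmod w powr \<gamma>) * w + v * w)) b
            - char_t Q (t,x,w) (\<i> * (c' + of_real (cmod w powr \<gamma>) * w + v' * w)) b')
     + (char_xx Q (t,x,w) b c - char_xx Q (t,x,w) b' c') + (v - v') * vu Q (t,x,w) = 0"
  (is "?lhs = 0")
proof -
  let ?e = "\<lambda>b c v. \<i> * char_t Q (t,x,w) (\<i> * (c + of_real (cmod w powr \<gamma>) * w + v * w)) b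
    + char_xx Q (t,x,w) b c + power_term_deriv \<gamma> w (vu Q (t,x,w)) + v * vu Q (t,x,w)"
  have "?lhs = ?e b c v - ?e b' c' v'" by (simp add: algebra_simps)
  also have "\<dots> = 0" using determining_eq[OF w] by simp
  finally show ?thesis .
qed

text \<open>Changing the constant potential by \<open>V\<close> shifts \<open>\<psi>\<^sub>t\<close> by \<open>\<i> V w\<close>; this isolates the
  \<open>\<psi>\<close>-derivatives of \<open>Q\<close>.\<close>

lemma psi_derivs:
  assumes w: "w \<noteq> 0"
  shows "Deta Q (t,x,w) (0,0,\<delta>) - of_real (Dxi Q (t,x,w) (0,0,\<delta>)) * b = \<delta> * vu Q (t,x,w) / w"
proof -
  let ?z = "(t,x,w)" and ?f = "of_real (cmod w powr \<gamma>) * w"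
  define V where "V = - \<i> * \<delta> / w"
  have "\<i> * (0 + ?f + V * w) - \<i> * (0 + ?f + 0 * w) = \<delta>" using w by (simp add: V_def field_simps)
  then have "\<i> * (Deta Q ?z (0,0,\<delta>) - of_real (Dxi Q ?z (0,0,\<delta>)) * b) + V * vu Q ?z = 0"
    using determining_eq_diff[OF w, of t x 0 V b 0 0 b] by (simp add: char_t_diff[OF in_D[OF w]])
  then have "\<i> * (Deta Q ?z (0,0,\<delta>) - of_real (Dxi Q ?z (0,0,\<delta>)) * b - \<delta> * vu Q ?z / w) = 0"
    using w by (simp add: V_def field_simps)
  then show ?thesis by simp
qed

lemma Deta_psi: "w \<noteq> 0 \<Longrightarrow> Deta Q (t,x,w) (0,0,\<delta>) = \<delta> * vu Q (t,x,w) / w"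
  using psi_derivs[of w t x \<delta> 0] by simp

lemma Dxi_psi: "w \<noteq> 0 \<Longrightarrow> Dxi Q (t,x,w) (0,0,\<delta>) = 0"
  using psi_derivs[of w t x \<delta> 0] psi_derivs[of w t x \<delta> 1] by simp

lemma Dxi_x:
  assumes w: "w \<noteq> 0"
  shows "Dxi Q (t,x,w) (0,1,0) = 0"
proof -
  let ?z = "(t,x,w)"
  have xx: "char_xx Q ?z 0 1 - char_xx Q ?z 0 0 = Deta Q ?z (0,0,1) - 2 * of_real (Dxi Q ?z (0,1,0))"
    unfolding char_xx_def by simp
  have "\<i> * Deta Q ?z (0,0,\<i>) + Deta Q ?z (0,0,1) - 2 * of_real (Dxi Q ?z (0,1,0)) = 0"
    using determining_eq_diff[OF w, of t x 1 0 0 0 0 0]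
    unfolding char_t_diff[OF in_D[OF w]] xx by (simp add: algebra_simps)
  then show ?thesis using w by (simp add: Deta_psi field_simps)
qed

lemma has_derivative_eta: "z \<in> D \<Longrightarrow> (vu Q has_derivative Deta Q z) (at z)"
  unfolding vu_def[abs_def] by (intro has_derivative_snd has_derivative_DQ[OF smooth])

lemma has_derivative_xi: "z \<in> D \<Longrightarrow> (vx Q has_derivative Dxi Q z) (at z)"
  unfolding vx_def[abs_def] by (intro has_derivative_fst has_derivative_snd has_derivative_DQ[OF smooth])

lemma has_derivative_Deta: "z \<in> D \<Longrightarrow> ((\<lambda>y. Deta Q y e) has_derivative D2eta Q e z) (at z)"
  by (intro has_derivative_snd has_derivative_D2Q[OF smooth])

lemma has_derivative_Dxi: "z \<in> D \<Longrightarrow> ((\<lambda>y. Dxi Q y e) has_derivative D2xi Q e z) (at z)"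
  by (intro has_derivative_fst has_derivative_snd has_derivative_D2Q[OF smooth])

lemma DQ_scaleR: "z \<in> D \<Longrightarrow> DQ Q z (h *\<^sub>R v) = h *\<^sub>R DQ Q z v"
  by (rule linear_scale[OF linear_DQ[OF smooth]])

lemma DQ_t: "z \<in> D \<Longrightarrow> DQ Q z (h,0,0) = h *\<^sub>R DQ Q z (1,0,0)"
  using DQ_scaleR[of z h "(1,0,0)"] by simp

lemma DQ_x: "z \<in> D \<Longrightarrow> DQ Q z (0,h,0) = h *\<^sub>R DQ Q z (0,1,0)"
  using DQ_scaleR[of z h "(0,1,0)"] by simp

lemma DQ_zero: "z \<in> D \<Longrightarrow> DQ Q z (0,0,0) = 0"
  using linear_0[OF linear_DQ[OF smooth]] by (simp add: zero_prod_def)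

lemma D2Q_zero: "z \<in> D \<Longrightarrow> D2Q Q e z (0,0,0) = 0"
  using linear_0[OF linear_D2Q[OF smooth]] by (simp add: zero_prod_def)

lemma eta_linear_in_psi:
  assumes w: "w \<noteq> 0"
  shows "vu Q (t,x,w) = w * vu Q (t,x,1)"
proof -
  have "vu Q (t,x,w) / w = vu Q (t,x,1) / 1"
  proof (rule constant_on_punctured_plane[OF _ w])
    fix w :: complex assume w: "w \<noteq> 0"
    have "((\<lambda>w. vu Q (t,x,w)) has_derivative (\<lambda>h. h * vu Q (t,x,w) / w)) (at w)"
      using has_derivative_compose_at[OF has_derivative_line_psi _ has_derivative_eta[OF in_D[OF w]]]
      by (simp add: Deta_psi[OF w])
    from has_derivative_divide'[OF this has_derivative_ident w]
    show "((\<lambda>w. vu Q (t,x,w) / w) has_derivative (\<lambda>h. 0)) (at w)"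
      using w by (simp add: field_simps)
  qed
  then show ?thesis using w by (simp add: divide_eq_eq mult.commute)
qed

lemma xi_eq_origin:
  assumes w: "w \<noteq> 0"
  shows "vx Q (t,x,w) = vx Q (t,0,1)"
proof -
  have "vx Q (t,x,w) = vx Q (t,x,1)"
  proof (rule constant_on_punctured_plane[OF _ w])
    fix w :: complex assume w: "w \<noteq> 0"
    show "((\<lambda>w. vx Q (t,x,w)) has_derivative (\<lambda>h. 0)) (at w)"
      using has_derivative_compose_at[OF has_derivative_line_psi _ has_derivative_xi[OF in_D[OF w]]]
      by (simp add: Dxi_psi[OF w])
  qed
  also have "vx Q (t,x,1) = vx Q (t,0,1) + x *\<^sub>R 0"
  proof (rule affine_if_has_derivative_const)
    fix s
    have "Dxi Q (t,s,1) (0,h,0) = 0" for h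
      using DQ_x[OF unit_in_D, of t s h] Dxi_x[of 1 t s] by simp
    then show "((\<lambda>s. vx Q (t,s,1)) has_derivative (\<lambda>h. h *\<^sub>R 0)) (at s)"
      using has_derivative_compose_at[OF has_derivative_line_x _ has_derivative_xi[OF unit_in_D[of t s]]]
      by simp
  qed
  finally show ?thesis by simp
qed

lemma Deta_eq:
  assumes w: "w \<noteq> 0"
  shows "Deta Q (t,x,w) h = snd (snd h) * vu Q (t,x,1) + w * Deta Q (t,x,1) (fst h, fst (snd h), 0)"
proof -
  have "((\<lambda>y. snd (snd y)) has_derivative (\<lambda>h. snd (snd h))) (at (t,x,w))"
    by (auto intro!: derivative_eq_intros)
  from has_derivative_mult[OF this has_derivative_on_unit_section[OF has_derivative_eta[OF unit_in_D]]]
  have "((\<lambda>y. snd (snd y) * vu Q (fst y, fst (snd y), 1)) has_derivative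
      (\<lambda>h. w * Deta Q (t,x,1) (fst h, fst (snd h), 0) + snd (snd h) * vu Q (t,x,1))) (at (t,x,w))"
    by simp
  with has_derivative_eta[OF in_D[OF w]]
  have "Deta Q (t,x,w) = (\<lambda>h. w * Deta Q (t,x,1) (fst h, fst (snd h), 0) + snd (snd h) * vu Q (t,x,1))"
    by (rule has_derivative_eq_on_D[OF _ _ in_D[OF w]]) (simp only: fst_conv snd_conv, rule eta_linear_in_psi)
  from fun_cong[OF this] show ?thesis by simp
qed

lemma Dxi_eq:
  assumes w: "w \<noteq> 0"
  shows "Dxi Q (t,x,w) h = Dxi Q (t,0,1) (fst h, 0, 0)"
proof -
  have "Dxi Q (t,x,w) = (\<lambda>h. Dxi Q (t,0,1) (fst h, 0, 0))"
    by (rule has_derivative_eq_on_D[OF has_derivative_xi[OF in_D[OF w]]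
          has_derivative_on_unit_axis[OF has_derivative_xi[OF unit_in_D]] in_D[OF w]])
      (simp only: fst_conv, rule xi_eq_origin)
  from fun_cong[OF this] show ?thesis by simp
qed

lemma Dxi_x_psi: "w \<noteq> 0 \<Longrightarrow> Dxi Q (t,x,w) (0, r, s) = 0"
  using Dxi_eq DQ_zero[OF unit_in_D] by simp

lemma D2xi_x_psi:
  assumes w: "w \<noteq> 0"
  shows "D2xi Q (0,r,s) (t,x,w) v = 0"
proof -
  have "D2xi Q (0,r,s) (t,x,w) = (\<lambda>v. 0)"
    by (rule has_derivative_eq_on_D[OF has_derivative_Dxi[OF in_D[OF w]] has_derivative_const in_D[OF w]])
      (simp add: Dxi_x_psi)
  from fun_cong[OF this] show ?thesis by simp
qed

lemma D2eta_psi: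
  assumes w: "w \<noteq> 0"
  shows "D2eta Q (0,0,\<delta>) (t,x,w) v = \<delta> * Deta Q (t,x,1) (fst v, fst (snd v), 0)"
proof -
  have "D2eta Q (0,0,\<delta>) (t,x,w) = (\<lambda>v. \<delta> * Deta Q (t,x,1) (fst v, fst (snd v), 0))"
    by (rule has_derivative_eq_on_D[OF has_derivative_Deta[OF in_D[OF w]]
          has_derivative_mult_right[OF has_derivative_on_unit_section[OF has_derivative_eta[OF unit_in_D]]]
          in_D[OF w]])
      (simp add: Deta_eq[where h="(0,0,\<delta>)"] DQ_zero[OF unit_in_D])
  from fun_cong[OF this] show ?thesis by simp
qed

lemma D2eta_x:
  assumes w: "w \<noteq> 0"
  shows "D2eta Q (0,1,0) (t,x,w) v = snd (snd v) * Deta Q (t,x,1) (0,1,0)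
     + w * D2eta Q (0,1,0) (t,x,1) (fst v, fst (snd v), 0)"
proof -
  have "((\<lambda>y. snd (snd y)) has_derivative (\<lambda>h. snd (snd h))) (at (t,x,w))"
    by (auto intro!: derivative_eq_intros)
  from has_derivative_mult[OF this has_derivative_on_unit_section[OF has_derivative_Deta[OF unit_in_D]]]
  have "((\<lambda>y. snd (snd y) * Deta Q (fst y, fst (snd y), 1) (0,1,0)) has_derivative
      (\<lambda>v. w * D2eta Q (0,1,0) (t,x,1) (fst v, fst (snd v), 0) + snd (snd v) * Deta Q (t,x,1) (0,1,0)))
      (at (t,x,w))"
    by simp
  with has_derivative_Deta[OF in_D[OF w]]
  have "D2eta Q (0,1,0) (t,x,w) = (\<lambda>v. w * D2eta Q (0,1,0) (t,x,1) (fst v, fst (snd v), 0)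
      + snd (snd v) * Deta Q (t,x,1) (0,1,0))"
    by (rule has_derivative_eq_on_D[OF _ _ in_D[OF w]]) (subst Deta_eq, simp_all)
  from fun_cong[OF this] show ?thesis by simp
qed

lemma char_xx_c0:
  assumes w: "w \<noteq> 0"
  shows "char_xx Q (t,x,w) b 0 = 2 * b * Deta Q (t,x,1) (0,1,0) + w * D2eta Q (0,1,0) (t,x,1) (0,1,0)"
proof -
  have "char_xx Q (t,x,w) b 0 = b * Deta Q (t,x,1) (0,1,0) + w * D2eta Q (0,1,0) (t,x,1) (0,1,0)
      + (Re b *\<^sub>R Deta Q (t,x,1) (0,1,0) + Im b *\<^sub>R (\<i> * Deta Q (t,x,1) (0,1,0)))"
    by (simp add: char_xx_def D2eta_x[OF w] D2eta_psi[OF w] D2xi_x_psi[OF w] Dxi_x_psi[OF w])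
  then show ?thesis by (simp add: re_im_scaleR_combination)
qed

lemma char_t_eq:
  assumes w: "w \<noteq> 0"
  shows "char_t Q (t,x,w) a b = a * vu Q (t,x,1) + w * Deta Q (t,x,1) (1,0,0) - of_real (xi_t t) * b"
  unfolding char_t_def using Deta_eq[OF w, of t x "(1,0,a)"] Dxi_eq[OF w, of t x "(1,0,a)"] by simp

lemma determining_eq_reduced:
  assumes w: "w \<noteq> 0"
  shows "(\<i> * (\<i> * of_real (cmod w powr \<gamma>) * w * vu Q (t,x,1) + w * Deta Q (t,x,1) (1,0,0))
        + w * D2eta Q (0,1,0) (t,x,1) (0,1,0) + power_term_deriv \<gamma> w (w * vu Q (t,x,1)))
     + b * (2 * Deta Q (t,x,1) (0,1,0) - \<i> * of_real (xi_t t)) = 0"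
  using determining_eq[OF w, where t=t and x=x and c=0 and v=0 and b=b]
  unfolding char_t_eq[OF w] char_xx_c0[OF w] eta_linear_in_psi[OF w] by (simp add: algebra_simps)

lemma eta_x_eq: "Deta Q (t,x,1) (0,1,0) = \<i> * of_real (xi_t t) / 2"
proof -
  have "2 * Deta Q (t,x,1) (0,1,0) - \<i> * of_real (xi_t t) = 0"
    by (rule affine_coeff_eq_0) (rule determining_eq_reduced[OF one_neq_zero])
  then show ?thesis by (simp add: field_simps)
qed

lemma eta_xx_zero: "D2eta Q (0,1,0) (t,x,1) (0,1,0) = 0"
proof -
  have psi: "((\<lambda>y. snd (snd y)) has_derivative (\<lambda>h. snd (snd h))) (at (t,x,1))"
    by (auto intro!: derivative_eq_intros)
  have xi: "((\<lambda>y. \<i> / 2 * of_real (xi_t (fst y))) has_derivative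
      (\<lambda>v. \<i> / 2 * of_real (D2xi Q (1,0,0) (t,0,1) (fst v, 0, 0)))) (at (t,x,1))"
    by (intro has_derivative_mult_right has_derivative_of_real
        has_derivative_on_unit_axis[OF has_derivative_Dxi[OF unit_in_D]])
  from has_derivative_mult[OF psi xi]
  have "((\<lambda>y. snd (snd y) * (\<i> / 2 * of_real (xi_t (fst y)))) has_derivative
      (\<lambda>v. \<i> / 2 * of_real (D2xi Q (1,0,0) (t,0,1) (fst v, 0, 0))
        + snd (snd v) * (\<i> / 2 * of_real (xi_t t)))) (at (t,x,1))"
    by simp
  with has_derivative_Deta[OF unit_in_D]
  have "D2eta Q (0,1,0) (t,x,1) = (\<lambda>v. \<i> / 2 * of_real (D2xi Q (1,0,0) (t,0,1) (fst v, 0, 0))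
      + snd (snd v) * (\<i> / 2 * of_real (xi_t t)))"
    by (rule has_derivative_eq_on_D[OF _ _ unit_in_D]) (subst Deta_eq, simp_all add: eta_x_eq)
  from fun_cong[OF this, of "(0,1,0)"] show ?thesis using D2Q_zero[OF unit_in_D[of t 0]] by simp
qed

text \<open>Evaluating at \<open>|w| = 1\<close> and \<open>|w| = 2\<close> separates \<open>Re \<eta>\<close>: the power term scales it by \<open>2\<^sup>\<gamma> \<noteq> 1\<close>.\<close>

lemma eta_t_eq_1: "\<i> * Deta Q (t,x,1) (1,0,0) + of_real (\<gamma> * Re (vu Q (t,x,1))) = 0"
  using determining_eq_reduced[of 1 t x 0]
  by (simp add: eta_xx_zero power_term_deriv_1 algebra_simps)

lemma eta_t_eq_2: "\<i> * Deta Q (t,x,1) (1,0,0) + of_real (2 powr \<gamma> * \<gamma> * Re (vu Q (t,x,1))) = 0"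
proof -
  have "2 * (\<i> * Deta Q (t,x,1) (1,0,0) + of_real (2 powr \<gamma> * \<gamma> * Re (vu Q (t,x,1)))) = 0"
    using determining_eq_reduced[of 2 t x 0]
    by (simp add: eta_xx_zero power_term_deriv_2 algebra_simps)
  then show ?thesis by (metis mult_eq_0_iff zero_neq_numeral)
qed

lemma Re_eta_zero_and_eta_t_zero:
  assumes "\<gamma> \<noteq> 0"
  shows "Re (vu Q (t,x,1)) = 0" and "Deta Q (t,x,1) (1,0,0) = 0"
proof -
  have "\<i> * Deta Q (t,x,1) (1,0,0) + of_real (\<gamma> * Re (vu Q (t,x,1)))
      = \<i> * Deta Q (t,x,1) (1,0,0) + of_real (2 powr \<gamma> * \<gamma> * Re (vu Q (t,x,1)))"
    unfolding eta_t_eq_1 eta_t_eq_2 ..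
  then have "of_real (\<gamma> * Re (vu Q (t,x,1))) = (of_real (2 powr \<gamma> * \<gamma> * Re (vu Q (t,x,1))) :: complex)"
    by (rule add_left_imp_eq)
  then have "\<gamma> * Re (vu Q (t,x,1)) * (2 powr \<gamma> - 1) = 0"
    by (simp only: of_real_eq_iff) (simp add: algebra_simps)
  moreover have "2 powr \<gamma> \<noteq> 1" using assms by simp
  ultimately show re: "Re (vu Q (t,x,1)) = 0" using assms by simp
  show "Deta Q (t,x,1) (1,0,0) = 0" using eta_t_eq_1[of t x] unfolding re by simp
qed

lemma eta_indep_t:
  assumes "\<gamma> \<noteq> 0"
  shows "vu Q (t,x,1) = vu Q (0,x,1)"
proof -
  have "vu Q (t,x,1) = vu Q (0,x,1) + t *\<^sub>R 0"
  proof (rule affine_if_has_derivative_const)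
    fix s
    have "Deta Q (s,x,1) (h,0,0) = 0" for h
      using DQ_t[OF unit_in_D, of s x h] Re_eta_zero_and_eta_t_zero(2)[OF assms, of s x] by simp
    then show "((\<lambda>s. vu Q (s,x,1)) has_derivative (\<lambda>h. h *\<^sub>R 0)) (at s)"
      using has_derivative_compose_at[OF has_derivative_line_t _ has_derivative_eta[OF unit_in_D[of s x]]]
      by simp
  qed
  then show ?thesis by simp
qed

lemma eta_affine_x: "vu Q (t,x,1) = vu Q (t,0,1) + x *\<^sub>R (\<i> * of_real (xi_t t) / 2)"
proof (rule affine_if_has_derivative_const)
  fix s
  have "Deta Q (t,s,1) (0,h,0) = h *\<^sub>R (\<i> * of_real (xi_t t) / 2)" for h
    using DQ_x[OF unit_in_D, of t s h] eta_x_eq[of t s] by simp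
  then show "((\<lambda>s. vu Q (t,s,1)) has_derivative (\<lambda>h. h *\<^sub>R (\<i> * of_real (xi_t t) / 2))) (at s)"
    using has_derivative_compose_at[OF has_derivative_line_x _ has_derivative_eta[OF unit_in_D[of t s]]]
    by simp
qed

lemma xi_t_const:
  assumes "\<gamma> \<noteq> 0"
  shows "xi_t t = xi_t 0"
proof -
  have "\<i> * of_real (xi_t t) / 2 = vu Q (t,1,1) - vu Q (t,0,1)" using eta_affine_x[of t 1] by simp
  also have "\<dots> = vu Q (0,1,1) - vu Q (0,0,1)" using eta_indep_t[OF assms] by metis
  also have "\<dots> = \<i> * of_real (xi_t 0) / 2" using eta_affine_x[of 0 1] by simp
  finally show ?thesis by simp
qed

lemma xi_affine_t:
  assumes "\<gamma> \<noteq> 0"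
  shows "vx Q (t,0,1) = vx Q (0,0,1) + t * xi_t 0"
proof -
  have "vx Q (t,0,1) = vx Q (0,0,1) + t *\<^sub>R xi_t 0"
  proof (rule affine_if_has_derivative_const)
    fix s
    have "Dxi Q (s,0,1) (h,0,0) = h *\<^sub>R xi_t 0" for h
      using DQ_t[OF unit_in_D, of s 0 h] xi_t_const[OF assms, of s] by simp
    then show "((\<lambda>s. vx Q (s,0,1)) has_derivative (\<lambda>h. h *\<^sub>R xi_t 0)) (at s)"
      using has_derivative_compose_at[OF has_derivative_line_t _ has_derivative_xi[OF unit_in_D[of s 0]]]
      by simp
  qed
  then show ?thesis by simp
qed

lemma Q_eq_combination:
  assumes "\<gamma> \<noteq> 0" and w: "w \<noteq> 0"
  shows "Q (t,x,w) = (0, vx Q (0,0,1) + t * xi_t 0,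
            \<i> * of_real (Im (vu Q (0,0,1)) + x * xi_t 0 / 2) * w)"
proof -
  have "vt Q (t,x,w) = 0" using tau_zero in_D[OF w] by blast
  moreover have "vx Q (t,x,w) = vx Q (0,0,1) + t * xi_t 0"
    using xi_eq_origin[OF w, of t x] xi_affine_t[OF assms(1), of t] by simp
  moreover have "vu Q (t,x,w) = \<i> * of_real (Im (vu Q (0,0,1)) + x * xi_t 0 / 2) * w"
  proof -
    have re: "vu Q (0,0,1) = \<i> * of_real (Im (vu Q (0,0,1)))"
      using Re_eta_zero_and_eta_t_zero(1)[OF assms(1), of 0 0] by (simp add: complex_eq_iff)
    have "vu Q (t,x,w) = w * vu Q (t,x,1)" by (rule eta_linear_in_psi[OF w])
    also have "vu Q (t,x,1) = vu Q (t,0,1) + x *\<^sub>R (\<i> * of_real (xi_t t) / 2)" by (rule eta_affine_x)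
    also have "vu Q (t,0,1) = vu Q (0,0,1)" by (rule eta_indep_t[OF assms(1)])
    also have "xi_t t = xi_t 0" by (rule xi_t_const[OF assms(1)])
    finally show ?thesis by (subst (asm) re) (simp add: scaleR_conv_of_real algebra_simps)
  qed
  ultimately show ?thesis by (simp add: vt_def vx_def vu_def prod_eq_iff)
qed

end

lemma M_G_combination_eq:
  "c1 *\<^sub>R M_vf (t,x,w) + c2 *\<^sub>R G_vf (\<lambda>_. 1) (t,x,w) + c3 *\<^sub>R G_vf (\<lambda>t. t) (t,x,w)
     = (0, c2 + c3 * t, \<i> * of_real (c1 + c3 / 2 * x) * w)"
  by (simp add: M_vf_def G_vf_def scaleR_conv_of_real algebra_simps)

lemma power_term_deriv_rotation:
  "power_term_deriv \<gamma> w (\<i> * of_real \<theta> * w) = \<i> * of_real \<theta> * of_real (cmod w powr \<gamma>) * w"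
proof -
  have "inner (\<i> * of_real \<theta> * w) (sgn w) = 0"
    by (simp add: inner_complex_def sgn_div_norm algebra_simps)
  then show ?thesis by (simp add: power_term_deriv_def algebra_simps)
qed

text \<open>Apart from direct computation, the converse only needs the symmetry \<open>\<psi>\<^sub>t\<^sub>x = \<psi>\<^sub>x\<^sub>t\<close> of
  the second derivatives of a smooth \<open>\<psi>\<close>.\<close>

locale M_G_combination =
  fixes Q :: vfield and c1 c2 c3 :: real and u :: "real \<times> real \<Rightarrow> complex" and t0 x0 :: real
  assumes Q_form: "\<forall>z\<in>D. Q z = c1 *\<^sub>R M_vf z + c2 *\<^sub>R G_vf (\<lambda>_. 1) z + c3 *\<^sub>R G_vf (\<lambda>t. t) z"
    and smooth_u: "smooth_on UNIV u" and u_nonzero: "u (t0,x0) \<noteq> 0"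
begin

abbreviation "p \<equiv> (t0, x0)"
abbreviation "w \<equiv> u (t0, x0)"
abbreviation "\<theta> \<equiv> c1 + c3 / 2 * x0"

definition "N = {q. u q \<noteq> 0}"
definition "Du q = frechet_derivative u (at q)"
definition "char_form q = \<i> * of_real (c1 + c3 / 2 * snd q) * u q - of_real (c2 + c3 * fst q) * pdx u q"
definition "char_form_x q = \<i> * of_real (c3 / 2) * u q + \<i> * of_real (c1 + c3 / 2 * snd q) * pdx u q
   - of_real (c2 + c3 * fst q) * pdx (pdx u) q"

lemma Q_eq: "z \<in> D \<Longrightarrow> Q z = (0, c2 + c3 * fst z, \<i> * of_real (c1 + c3 / 2 * fst (snd z)) * snd (snd z))"
  using Q_form M_G_combination_eq by (cases z) auto

lemma has_derivative_u: "(u has_derivative Du q) (at q)"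
  unfolding Du_def by (rule has_derivative_smooth_on[OF smooth_u UNIV_I])

lemma smooth_pdt_u: "smooth_on UNIV (pdt u)"
  unfolding pdt_def[abs_def] by (rule smooth_on_frechet_derivative[OF smooth_u])

lemma smooth_pdx_u: "smooth_on UNIV (pdx u)"
  unfolding pdx_def[abs_def] by (rule smooth_on_frechet_derivative[OF smooth_u])

lemma smooth_pdxx_u: "smooth_on UNIV (pdx (pdx u))"
  unfolding pdx_def[of "pdx u", abs_def] by (rule smooth_on_frechet_derivative[OF smooth_pdx_u])

lemma open_N: "open N"
proof -
  have "N = u -` (- {0})" by (auto simp: N_def)
  then show ?thesis
    using continuous_open_vimage[OF open_Compl[OF closed_singleton]]
      has_derivative_continuous[OF has_derivative_u] by metis
qed

lemma p_in_N: "p \<in> N" using u_nonzero by (simp add: N_def)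

lemma charQ_eq_char_form: "q \<in> N \<Longrightarrow> charQ Q u q = char_form q"
  using Q_eq[OF pt_in_D, of u q] by (simp add: N_def charQ_def char_form_def vt_def vx_def vu_def pt_def)

lemma has_derivative_char_form:
  "(char_form has_derivative (\<lambda>h. \<i> * of_real (c3 / 2 * snd h) * u q + \<i> * of_real (c1 + c3 / 2 * snd q) * Du q h
     - (of_real (c3 * fst h) * pdx u q + of_real (c2 + c3 * fst q) * frechet_derivative (pdx u) (at q) h))) (at q)"
  unfolding char_form_def[abs_def]
  by (rule has_derivative_eq_rhs, (rule derivative_eq_intros has_derivative_u
        has_derivative_smooth_on[OF smooth_pdx_u UNIV_I] refl)+)
    (simp add: fun_eq_iff algebra_simps)

lemma has_derivative_char_form_x:
  "(char_form_x has_derivative (\<lambda>h. \<i> * of_real (c3 / 2) * Du p h + (\<i> * of_real (c3 / 2 * snd h) * pdx u p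
     + \<i> * of_real \<theta> * frechet_derivative (pdx u) (at p) h)
     - (of_real (c3 * fst h) * pdx (pdx u) p + of_real (c2 + c3 * t0) * frechet_derivative (pdx (pdx u)) (at p) h)))
     (at p)"
  unfolding char_form_x_def[abs_def]
  by (rule has_derivative_eq_rhs, (rule derivative_eq_intros has_derivative_u
        has_derivative_smooth_on[OF smooth_pdx_u UNIV_I] has_derivative_smooth_on[OF smooth_pdxx_u UNIV_I] refl)+)
    (simp add: fun_eq_iff algebra_simps)

lemma pdt_charQ: "pdt (charQ Q u) p = \<i> * of_real \<theta> * pdt u p - (of_real c3 * pdx u p + of_real (c2 + c3 * t0) * pdt (pdx u) p)"
proof -
  have "pdt (charQ Q u) p = pdt char_form p"
    unfolding pdt_def using frechet_derivative_cong_open[OF open_N p_in_N] charQ_eq_char_form by metis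
  then show ?thesis
    by (simp add: pdt_def frechet_derivative_at[OF has_derivative_char_form, symmetric] Du_def)
qed

lemma pdx_charQ: "q \<in> N \<Longrightarrow> pdx (charQ Q u) q = char_form_x q"
proof -
  assume q: "q \<in> N"
  have "pdx (charQ Q u) q = pdx char_form q"
    unfolding pdx_def using frechet_derivative_cong_open[OF open_N q] charQ_eq_char_form by metis
  then show ?thesis
    by (simp add: pdx_def frechet_derivative_at[OF has_derivative_char_form, symmetric] Du_def char_form_x_def)
qed

lemma pdxx_charQ: "pdx (pdx (charQ Q u)) p =
    \<i> * of_real c3 * pdx u p + \<i> * of_real \<theta> * pdx (pdx u) p - of_real (c2 + c3 * t0) * pdx (pdx (pdx u)) p"
proof -
  have "frechet_derivative (pdx (charQ Q u)) (at p) = frechet_derivative char_form_x (at p)"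
    by (rule frechet_derivative_cong_open[OF open_N p_in_N]) (simp add: pdx_charQ)
  then show ?thesis
    by (simp add: pdx_def frechet_derivative_at[OF has_derivative_char_form_x, symmetric] Du_def algebra_simps)
qed

lemma pdt_pdx_commute: "pdt (pdx u) p = pdx (pdt u) p"
proof -
  have "frechet_derivative (pdt u) (at p) (0,1) = frechet_derivative (pdx u) (at p) (1,0)"
  proof (rule mixed_partials_eq[where Df=Du])
    show "\<And>q. (u has_derivative Du q) (at q)" by (rule has_derivative_u)
    show "((\<lambda>q. Du q (1,0)) has_derivative frechet_derivative (pdt u) (at p)) (at p)"
      using has_derivative_smooth_on[OF smooth_pdt_u UNIV_I] unfolding pdt_def[abs_def] Du_def .
    show "((\<lambda>q. Du q (0,1)) has_derivative frechet_derivative (pdx u) (at p)) (at p)"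
      using has_derivative_smooth_on[OF smooth_pdx_u UNIV_I] unfolding pdx_def[abs_def] Du_def .
  qed
  then show ?thesis unfolding pdt_def[of "pdx u"] pdx_def[of "pdt u"] by simp
qed

lemma prolongation_value:
  "prQ Q u p = (0, c2 + c3 * t0, \<i> * of_real \<theta> * w,
     \<i> * of_real \<theta> * pdt u p - of_real c3 * pdx u p,
     \<i> * of_real c3 * pdx u p + \<i> * of_real \<theta> * pdx (pdx u) p)"
proof -
  have "pt u p \<in> D" using u_nonzero by (rule pt_in_D)
  then have "Q (pt u p) = (0, c2 + c3 * t0, \<i> * of_real \<theta> * w)"
    using Q_eq by (simp add: pt_def)
  then show ?thesis
    by (simp add: prQ_def eta_t_def eta_xx_def vt_def vx_def vu_def pdt_charQ pdxx_charQ pdt_pdx_commute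
        algebra_simps)
qed

lemma criterion_holds:
  assumes "smooth_on UNIV V" and eq: "NLS \<gamma> V (jet u p) = 0"
  shows "frechet_derivative (NLS \<gamma> V) (at (jet u p)) (prQ Q u p) = 0"
proof -
  have dV: "(V has_derivative frechet_derivative V (at t0)) (at t0)"
    by (rule has_derivative_smooth_on[OF assms(1) UNIV_I])
  then have "frechet_derivative V (at t0) 0 = 0" using has_derivative_linear linear_0 by blast
  moreover have jet: "jet u p = (t0, x0, w, pdt u p, pdx (pdx u) p)" by (simp add: jet_def)
  ultimately have "frechet_derivative (NLS \<gamma> V) (at (jet u p)) (prQ Q u p)
      = \<i> * of_real \<theta> * NLS \<gamma> V (jet u p)"
    unfolding jet prolongation_value frechet_derivative_NLS[OF dV u_nonzero] power_term_deriv_rotation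
    by (simp add: NLS_def algebra_simps)
  then show ?thesis using eq by simp
qed

end

lemma lie_sym_M_G_combination:
  assumes "smooth_on D Q" "smooth_on UNIV V"
    and "\<forall>z\<in>D. Q z = c1 *\<^sub>R M_vf z + c2 *\<^sub>R G_vf (\<lambda>_. 1) z + c3 *\<^sub>R G_vf (\<lambda>t. t) z"
  shows "lie_sym \<gamma> V Q"
  unfolding lie_sym_def
proof (intro conjI allI impI)
  fix u :: "real \<times> real \<Rightarrow> complex" and p :: "real \<times> real"
  assume u: "smooth_on UNIV u" and up: "u p \<noteq> 0" and eq: "NLS \<gamma> V (jet u p) = 0"
  obtain t0 x0 where pp: "p = (t0, x0)" by (cases p)
  interpret M_G_combination Q c1 c2 c3 u t0 x0
    using assms(3) u up pp by unfold_locales auto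
  show "frechet_derivative (NLS \<gamma> V) (at (jet u p)) (prQ Q u p) = 0"
    using criterion_holds[OF assms(2)] eq unfolding pp by blast
qed (rule assms(1))

lemma M_G_combination_if_lie_sym:
  assumes "\<gamma> \<noteq> 0" and lie: "\<And>V. smooth_on UNIV V \<Longrightarrow> lie_sym \<gamma> V Q"
  shows "\<exists>c1 c2 c3. \<forall>z\<in>D. Q z = c1 *\<^sub>R M_vf z + c2 *\<^sub>R G_vf (\<lambda>_. 1) z + c3 *\<^sub>R G_vf (\<lambda>t. t) z"
proof -
  have "smooth_on D Q" using lie[OF smooth_on_const] by (simp add: lie_sym_def)
  moreover have "\<forall>z\<in>D. vt Q z = 0" using tau_vanishes[OF lie] by blast
  ultimately interpret symmetry_const_potentials Q \<gamma>
    using lie[OF smooth_on_const] by unfold_locales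
  have "Q z = Im (vu Q (0,0,1)) *\<^sub>R M_vf z + vx Q (0,0,1) *\<^sub>R G_vf (\<lambda>_. 1) z + xi_t 0 *\<^sub>R G_vf (\<lambda>t. t) z"
    if "z \<in> D" for z
  proof -
    obtain t x w where z: "z = (t, x, w)" and w: "w \<noteq> 0" using \<open>z \<in> D\<close> by (cases z) (auto simp: D_def)
    show ?thesis unfolding z M_G_combination_eq Q_eq_combination[OF assms(1) w] by (simp add: algebra_simps)
  qed
  then show ?thesis by blast
qed

theorem lemma2:
  fixes \<gamma> :: real
  assumes "\<gamma> \<noteq> 0"
  shows "\<forall>Q. Q \<in> (\<Inter>V \<in> {V :: real \<Rightarrow> complex. smooth_on UNIV V}. max_inv_alg \<gamma> V) \<longleftrightarrow>
           smooth_on D Q \<and>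
           (\<exists>c1 c2 c3 :: real. \<forall>z\<in>D.
              Q z = c1 *\<^sub>R M_vf z + c2 *\<^sub>R G_vf (\<lambda>_. 1) z + c3 *\<^sub>R G_vf (\<lambda>t. t) z)"
proof (intro allI iffI)
  fix Q
  assume "Q \<in> (\<Inter>V \<in> {V. smooth_on UNIV V}. max_inv_alg \<gamma> V)"
  then have lie: "\<And>V. smooth_on UNIV V \<Longrightarrow> lie_sym \<gamma> V Q" by (simp add: max_inv_alg_def)
  then show "smooth_on D Q \<and> (\<exists>c1 c2 c3. \<forall>z\<in>D.
      Q z = c1 *\<^sub>R M_vf z + c2 *\<^sub>R G_vf (\<lambda>_. 1) z + c3 *\<^sub>R G_vf (\<lambda>t. t) z)"
    using lie_sym_def smooth_on_const M_G_combination_if_lie_sym[OF assms] by blast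
next
  fix Q
  assume "smooth_on D Q \<and> (\<exists>c1 c2 c3. \<forall>z\<in>D.
      Q z = c1 *\<^sub>R M_vf z + c2 *\<^sub>R G_vf (\<lambda>_. 1) z + c3 *\<^sub>R G_vf (\<lambda>t. t) z)"
  then show "Q \<in> (\<Inter>V \<in> {V. smooth_on UNIV V}. max_inv_alg \<gamma> V)"
    using lie_sym_M_G_combination by (auto simp: max_inv_alg_def)
qed

end
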